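(* Let $n\in\mathbb{N}$, $\alpha\in\mathbb{R}$ with $n<\alpha\le n+1$, $k\in\mathbb{N}$, $\mu\in\mathbb{R}$ with $\mu>-1$, and $T>0$. Put $\gamma_{n,k,\mu,\alpha}=\frac{\Gamma(\alpha-n)}{\mathrm{B}(\alpha+1+k,\,n+\mu+2)}$ and, for a function $g$ integrable on $[t_0,t_0+T]$, $$\tilde g^{(\alpha)}_{t_0}(k,\mu,T):=\frac{(n+1)!}{T^{\alpha}}\,\gamma_{n,k,\mu,\alpha}\int_0^1 w_{\mu,k}(\tau)\,P^{(\mu,k)}_{n+1}(\tau)\,g(t_0+T\tau)\,d\tau .$$ Let $y=x+\varpi$ be a noisy signal observed on an open interval $I\subset\mathbb{R}$, where $x\in\mathcal{C}^n(I)$ and $\varpi$ is a bounded integrable noise, let $t_0\in I$ and $T\in D_{t_0}=\{t\in\mathbb{R}_+:\ t_0+t\in I\}$. Then $\tilde y^{(\alpha)}_{t_0}(k,\mu,T)$ is an estimator of the Jumarie derivative value $x^{(\alpha)}(t_0)$, in the sense that if $y$ is replaced by the truncated fractional Taylor expansion $$x_\alpha(t_0+t)=\sum_{j=0}^{n}\frac{t^j}{j!}x^{(j)}(t_0)+\frac{t^{\alpha}}{\Gamma(\alpha+1)}x^{(\alpha)}(t_0),\qquad t\ge 0,$$ the formula is exact: $\tilde{(x_\alpha)}^{(\alpha)}_{t_0}(k,\mu,T)=x^{(\alpha)}(t_0)$.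
   Context: $\mathrm{B}$ is the Euler beta function. $P^{(\mu,k)}_{m}$ denotes the shifted Jacobi polynomial on $[0,1]$: $P^{(\mu,k)}_{m}(\tau)=\sum_{j=0}^{m}\binom{m+\mu}{j}\binom{m+k}{m-j}(\tau-1)^{m-j}\tau^{j}$, with weight $w_{\mu,k}(\tau)=(1-\tau)^{\mu}\tau^{k}$. The fractional derivative is Jumarie's modified Riemann–Liouville derivative: for continuous $f$ and $0\le l-1\le\beta<l$, $l\in\mathbb{N}^*$, $f^{(\beta)}(t)=\frac{1}{\Gamma(l-\beta)}\frac{d^l}{dt^l}\int_0^t\frac{f(\tau)-f(0)}{(t-\tau)^{\beta+1-l}}d\tau$; for $n<\alpha\le n+1$, $x^{(\alpha)}$ means $(x^{(n)})^{(\alpha-n)}$, taken at the point $t_0$ (i.e. with base point $t_0$). The values $x^{(j)}(t_0)$, $0\le j\le n$, are ordinary derivatives. *)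

theory Defs
  imports "HOL-Analysis.Analysis"
begin

definition jacobi_shift :: "nat \<Rightarrow> real \<Rightarrow> nat \<Rightarrow> real \<Rightarrow> real" where
  "jacobi_shift m \<mu> k \<tau> =
     (\<Sum>j=0..m. ((real m + \<mu>) gchoose j) * real ((m + k) choose (m - j))
                 * (\<tau> - 1) ^ (m - j) * \<tau> ^ j)"

definition jacobi_weight :: "real \<Rightarrow> nat \<Rightarrow> real \<Rightarrow> real" where
  "jacobi_weight \<mu> k \<tau> = (1 - \<tau>) powr \<mu> * \<tau> ^ k"

definition gamma_const :: "nat \<Rightarrow> nat \<Rightarrow> real \<Rightarrow> real \<Rightarrow> real" where
  "gamma_const n k \<mu> \<alpha> = Gamma (\<alpha> - real n) / Beta (\<alpha> + 1 + real k) (real n + \<mu> + 2)"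

definition frac_estimator ::
  "nat \<Rightarrow> real \<Rightarrow> nat \<Rightarrow> real \<Rightarrow> real \<Rightarrow> real \<Rightarrow> (real \<Rightarrow> real) \<Rightarrow> real" where
  "frac_estimator n \<alpha> k \<mu> T t0 g =
     fact (n + 1) / T powr \<alpha> * gamma_const n k \<mu> \<alpha> *
     integral {0..1} (\<lambda>\<tau>. jacobi_weight \<mu> k \<tau> * jacobi_shift (n + 1) \<mu> k \<tau> * g (t0 + T * \<tau>))"

text \<open>Jumarie's modified Riemann-Liouville derivative of order beta (beta \<ge> 0),
  base point t0, evaluated at t; l = floor beta + 1, so l - 1 \<le> beta < l.\<close>
definition jumarie :: "real \<Rightarrow> (real \<Rightarrow> real) \<Rightarrow> real \<Rightarrow> real \<Rightarrow> real" where
  "jumarie \<beta> f t0 t =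
     (let l = nat \<lfloor>\<beta>\<rfloor> + 1 in
       1 / Gamma (real l - \<beta>) *
       (deriv ^^ l) (\<lambda>s. integral {t0..s} (\<lambda>\<tau>. (f \<tau> - f t0) / (s - \<tau>) powr (\<beta> + 1 - real l))) t)"

text \<open>x^(alpha)(t0) for n < alpha \<le> n+1: (x^(n))^(alpha - n) with base point t0.\<close>
definition jumarie_ho :: "nat \<Rightarrow> real \<Rightarrow> (real \<Rightarrow> real) \<Rightarrow> real \<Rightarrow> real" where
  "jumarie_ho n \<alpha> x t0 = jumarie (\<alpha> - real n) ((deriv ^^ n) x) t0 t0"

definition Cn_on :: "nat \<Rightarrow> real set \<Rightarrow> (real \<Rightarrow> real) \<Rightarrow> bool" where
  "Cn_on n I x \<longleftrightarrow>
     (\<forall>j<n. \<forall>t\<in>I. ((deriv ^^ j) x has_real_derivative (deriv ^^ Suc j) x t) (at t))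
     \<and> continuous_on I ((deriv ^^ n) x)"

definition frac_taylor :: "nat \<Rightarrow> real \<Rightarrow> (real \<Rightarrow> real) \<Rightarrow> real \<Rightarrow> real \<Rightarrow> real" where
  "frac_taylor n \<alpha> x t0 s =
     (\<Sum>j=0..n. (s - t0) ^ j / fact j * (deriv ^^ j) x t0)
     + (s - t0) powr \<alpha> / Gamma (\<alpha> + 1) * jumarie_ho n \<alpha> x t0"

end

theory Submission imports Defs
begin

text \<open>Expanding the shifted Jacobi polynomial and absorbing the weight, the moment
  \<open>\<integral>\<^sub>0\<^sup>1 w(\<tau>) P\<^sub>m(\<tau>) \<tau> powr \<beta> d\<tau>\<close> becomes a finite sum of Beta integrals, which
  the Chu--Vandermonde identity collapses to \<open>(\<beta> gchoose m) * Beta (\<beta>+k+1) (\<mu>+m+1)\<close>.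
  This vanishes for \<open>\<beta> = 0, \<dots>, m-1\<close>, so \<open>P\<^sub>n\<^sub>+\<^sub>1\<close> annihilates the polynomial part of
  the fractional Taylor expansion and only the \<open>t powr \<alpha>\<close> term survives, whose moment
  the normalising constant of the estimator inverts exactly. The value \<open>x\<^sup>(\<^sup>\<alpha>\<^sup>)(t\<^sub>0)\<close>
  enters only as a coefficient.\<close>

lemma jacobi_moment_sum_Beta:
  fixes \<beta> \<mu> :: real and m k :: nat
  assumes "\<mu> > -1" "real k + \<beta> + 1 > 0"
  shows "(\<Sum>j=0..m. ((real m + \<mu>) gchoose j) * real ((m + k) choose (m - j)) * (-1)^(m-j)
            * Beta (real k + \<beta> + real j + 1) (\<mu> + real (m - j) + 1))
         = (\<beta> gchoose m) * Beta (\<beta> + real k + 1) (\<mu> + real m + 1)"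
proof -
  define c where "c = real k + \<beta> + 1"
  define S where "S = Gamma (c + \<mu> + real m + 1)"
  have c_np: "c \<notin> \<int>\<^sub>\<le>\<^sub>0" using assms by (auto simp: c_def dest: nonpos_Ints_nonpos)
  have term_eq: "((real m + \<mu>) gchoose j) * real ((m + k) choose (m - j)) * (-1)^(m-j)
            * Beta (real k + \<beta> + real j + 1) (\<mu> + real (m - j) + 1)
        = (-1)^m * (((-c) gchoose j) * (real (m+k) gchoose (m - j)))
            * (Gamma c * Gamma (\<mu> + real m + 1) / S)"
    if "j \<in> {0..m}" for j
  proof -
    have jm: "j \<le> m" using that by simp
    have "Gamma c > 0" using assms by (simp add: c_def)
    then have Gamma_c: "Gamma (real k + \<beta> + real j + 1) = pochhammer c j * Gamma c"
      using pochhammer_Gamma[OF c_np, of j] by (simp add: c_def field_simps)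
    have np: "\<mu> + real (m - j) + 1 \<notin> \<int>\<^sub>\<le>\<^sub>0"
      using assms by (auto dest: nonpos_Ints_nonpos)
    have Gamma_\<mu>: "Gamma (\<mu> + real m + 1)
        = fact j * (((real m + \<mu>) gchoose j) * Gamma (\<mu> + real (m - j) + 1))"
    proof -
      have "((real m + \<mu>) gchoose j) = pochhammer (\<mu> + real (m - j) + 1) j / fact j"
        using jm by (simp add: gbinomial_pochhammer' of_nat_diff algebra_simps)
      moreover have "pochhammer (\<mu> + real (m - j) + 1) j
          = Gamma (\<mu> + real m + 1) / Gamma (\<mu> + real (m - j) + 1)"
        using pochhammer_Gamma[OF np, of j] jm by (simp add: of_nat_diff algebra_simps)
      moreover have "Gamma (\<mu> + real (m - j) + 1) > 0"
        using assms by (intro Gamma_real_pos) simp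
      ultimately show ?thesis by simp
    qed
    have S_eq: "Gamma (real k + \<beta> + real j + 1 + (\<mu> + real (m - j) + 1)) = S"
      using jm by (simp add: S_def c_def of_nat_diff algebra_simps)
    have neg_c: "((-c) gchoose j) = (-1)^j * pochhammer c j / fact j"
      by (simp add: gbinomial_pochhammer)
    have choose_eq: "real ((m + k) choose (m - j)) = (real (m+k) gchoose (m - j))"
      by (simp add: binomial_gbinomial)
    have sign: "(-1::real)^(m-j) = (-1)^m * (-1)^j"
    proof -
      obtain d where "m = j + d" using jm le_Suc_ex by blast
      then show ?thesis by (simp add: power_add power_mult)
    qed
    show ?thesis
      unfolding Beta_def S_eq Gamma_c neg_c choose_eq sign Gamma_\<mu> by (simp add: field_simps)
  qed
  have "(\<Sum>j=0..m. ((real m + \<mu>) gchoose j) * real ((m + k) choose (m - j)) * (-1)^(m-j)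
            * Beta (real k + \<beta> + real j + 1) (\<mu> + real (m - j) + 1))
      = (-1)^m * (\<Sum>j=0..m. ((-c) gchoose j) * (real (m+k) gchoose (m - j)))
          * (Gamma c * Gamma (\<mu> + real m + 1) / S)"
    by (simp only: sum.cong[OF refl term_eq] sum_distrib_left[symmetric] sum_distrib_right[symmetric])
  also have "(\<Sum>j=0..m. ((-c) gchoose j) * (real (m+k) gchoose (m - j))) = (real m - \<beta> - 1) gchoose m"
    by (subst gbinomial_Vandermonde) (simp add: c_def algebra_simps)
  also have "(-1)^m * ((real m - \<beta> - 1) gchoose m) = \<beta> gchoose m"
    by (simp add: gbinomial_negated_upper[of \<beta> m])
  finally show ?thesis
    by (simp add: Beta_def S_def c_def algebra_simps)
qed

lemma jacobi_weight_shift_powr_expand: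
  fixes \<beta> \<mu> \<tau> :: real and m k :: nat
  assumes "0 < \<tau>" "\<tau> < 1"
  shows "jacobi_weight \<mu> k \<tau> * jacobi_shift m \<mu> k \<tau> * \<tau> powr \<beta> =
    (\<Sum>j=0..m. (((real m + \<mu>) gchoose j) * real ((m + k) choose (m - j)) * (-1)^(m-j)) *
       (\<tau> powr ((real k + \<beta> + real j + 1) - 1) * (1 - \<tau>) powr ((\<mu> + real (m - j) + 1) - 1)))"
  unfolding jacobi_weight_def jacobi_shift_def sum_distrib_left sum_distrib_right
proof (rule sum.cong[OF refl])
  fix j
  have "(\<tau> - 1)^(m-j) = (-1)^(m-j) * (1 - \<tau>) powr real (m - j)"
    using assms power_minus[of "1 - \<tau>" "m - j"] by (simp add: powr_realpow)
  moreover have "\<tau> powr ((real k + \<beta> + real j + 1) - 1) = \<tau> ^ k * \<tau> ^ j * \<tau> powr \<beta>"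
    using assms by (simp add: powr_realpow[symmetric] powr_add[symmetric] algebra_simps)
  moreover have "(1 - \<tau>) powr ((\<mu> + real (m - j) + 1) - 1) = (1 - \<tau>) powr \<mu> * (1 - \<tau>) powr real (m - j)"
    by (simp add: powr_add[symmetric])
  ultimately show "(1 - \<tau>) powr \<mu> * \<tau> ^ k * (((real m + \<mu>) gchoose j) * real ((m + k) choose (m - j))
                 * (\<tau> - 1) ^ (m - j) * \<tau> ^ j) * \<tau> powr \<beta> =
       (((real m + \<mu>) gchoose j) * real ((m + k) choose (m - j)) * (-1)^(m-j)) *
       (\<tau> powr ((real k + \<beta> + real j + 1) - 1) * (1 - \<tau>) powr ((\<mu> + real (m - j) + 1) - 1))"
    by (simp add: mult_ac)
qed

lemma has_integral_jacobi_moment: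
  fixes \<beta> \<mu> :: real and m k :: nat
  assumes "\<mu> > -1" "real k + \<beta> + 1 > 0"
  shows "((\<lambda>\<tau>. jacobi_weight \<mu> k \<tau> * jacobi_shift m \<mu> k \<tau> * \<tau> powr \<beta>) has_integral
           ((\<beta> gchoose m) * Beta (\<beta> + real k + 1) (\<mu> + real m + 1))) {0..1}"
proof -
  have "((\<lambda>\<tau>. \<Sum>j=0..m. (((real m + \<mu>) gchoose j) * real ((m + k) choose (m - j)) * (-1)^(m-j)) *
       (\<tau> powr ((real k + \<beta> + real j + 1) - 1) * (1 - \<tau>) powr ((\<mu> + real (m - j) + 1) - 1)))
     has_integral (\<Sum>j=0..m. (((real m + \<mu>) gchoose j) * real ((m + k) choose (m - j)) * (-1)^(m-j)) *
       Beta (real k + \<beta> + real j + 1) (\<mu> + real (m - j) + 1))) {0<..<1}"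
    using assms
    by (intro has_integral_sum has_integral_mult_right has_integral_Beta_real[unfolded
          has_integral_Icc_iff_Ioo]) auto
  then have "((\<lambda>\<tau>. jacobi_weight \<mu> k \<tau> * jacobi_shift m \<mu> k \<tau> * \<tau> powr \<beta>) has_integral
           ((\<beta> gchoose m) * Beta (\<beta> + real k + 1) (\<mu> + real m + 1))) {0<..<1}"
    unfolding jacobi_moment_sum_Beta[OF assms, symmetric]
    by (subst has_integral_cong[OF jacobi_weight_shift_powr_expand]) auto
  then show ?thesis by (simp add: has_integral_Icc_iff_Ioo)
qed

lemma has_integral_jacobi_monomial_below:
  fixes \<mu> :: real and j m k :: nat
  assumes "\<mu> > -1" "j < m"
  shows "((\<lambda>\<tau>. jacobi_weight \<mu> k \<tau> * jacobi_shift m \<mu> k \<tau> * \<tau> ^ j) has_integral 0) {0..1}"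
proof -
  have "((\<lambda>\<tau>. jacobi_weight \<mu> k \<tau> * jacobi_shift m \<mu> k \<tau> * \<tau> powr real j) has_integral 0) {0<..<1}"
    using has_integral_jacobi_moment[OF assms(1), of k "real j" m] assms(2)
    by (simp add: binomial_gbinomial[symmetric] binomial_eq_0 has_integral_Icc_iff_Ioo)
  then show ?thesis
    unfolding has_integral_Icc_iff_Ioo by (rule has_integral_eq[rotated]) (simp add: powr_realpow)
qed

lemma has_integral_jacobi_poly_plus_powr:
  fixes \<alpha> \<mu> b :: real and a :: "nat \<Rightarrow> real" and n k :: nat
  assumes "\<mu> > -1" "real k + \<alpha> + 1 > 0"
  shows "((\<lambda>\<tau>. jacobi_weight \<mu> k \<tau> * jacobi_shift (n + 1) \<mu> k \<tau>
              * ((\<Sum>j=0..n. a j * \<tau> ^ j) + b * \<tau> powr \<alpha>))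
          has_integral b * ((\<alpha> gchoose (n + 1)) * Beta (\<alpha> + real k + 1) (\<mu> + real n + 2))) {0..1}"
proof -
  have "((\<lambda>\<tau>. (\<Sum>j=0..n. a j * (jacobi_weight \<mu> k \<tau> * jacobi_shift (n + 1) \<mu> k \<tau> * \<tau> ^ j))
            + b * (jacobi_weight \<mu> k \<tau> * jacobi_shift (n + 1) \<mu> k \<tau> * \<tau> powr \<alpha>))
        has_integral (\<Sum>j=0..n. a j * 0)
          + b * ((\<alpha> gchoose (n + 1)) * Beta (\<alpha> + real k + 1) (\<mu> + real (n + 1) + 1))) {0..1}"
    using assms
    by (intro has_integral_add has_integral_sum has_integral_mult_right
          has_integral_jacobi_monomial_below has_integral_jacobi_moment) auto
  then show ?thesis
    by (simp add: sum_distrib_left sum_distrib_right algebra_simps)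
qed

lemma frac_taylor_rescaled:
  assumes "T > 0" "\<tau> \<ge> 0"
  shows "frac_taylor n \<alpha> x t0 (t0 + T * \<tau>)
    = (\<Sum>j=0..n. (T ^ j / fact j * (deriv ^^ j) x t0) * \<tau> ^ j)
      + (T powr \<alpha> / Gamma (\<alpha> + 1) * jumarie_ho n \<alpha> x t0) * \<tau> powr \<alpha>"
  using assms unfolding frac_taylor_def
  by (simp add: powr_mult power_mult_distrib mult_ac)

lemma gbinomial_Suc_fact_Gamma:
  fixes \<alpha> :: real
  assumes "real n < \<alpha>"
  shows "(\<alpha> gchoose (n + 1)) * fact (n + 1) * Gamma (\<alpha> - real n) = Gamma (\<alpha> + 1)"
proof -
  have np: "\<alpha> - real n \<notin> \<int>\<^sub>\<le>\<^sub>0" using assms by (auto dest: nonpos_Ints_nonpos)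
  have "(\<alpha> gchoose (n + 1)) = pochhammer (\<alpha> - real n) (n + 1) / fact (n + 1)"
    by (simp add: gbinomial_pochhammer' algebra_simps)
  moreover have "pochhammer (\<alpha> - real n) (n + 1) = Gamma (\<alpha> + 1) / Gamma (\<alpha> - real n)"
    using pochhammer_Gamma[OF np, of "n + 1"] by (simp add: algebra_simps)
  moreover have "Gamma (\<alpha> - real n) > 0" using assms by simp
  ultimately show ?thesis by simp
qed

theorem proposition1:
  fixes n k :: nat and \<alpha> \<mu> T t0 :: real and I :: "real set" and x :: "real \<Rightarrow> real"
  assumes "real n < \<alpha>" and "\<alpha> \<le> real n + 1"
    and "\<mu> > -1" and "T > 0"
    and "open I" and "Cn_on n I x"
    and "t0 \<in> I" and "t0 + T \<in> I"
  shows "frac_estimator n \<alpha> k \<mu> T t0 (frac_taylor n \<alpha> x t0) = jumarie_ho n \<alpha> x t0"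
proof -
  define D where "D = jumarie_ho n \<alpha> x t0"
  define B where "B = Beta (\<alpha> + real k + 1) (\<mu> + real n + 2)"
  have \<alpha>_pos: "\<alpha> > 0" using assms(1) by linarith
  have "integral {0..1} (\<lambda>\<tau>. jacobi_weight \<mu> k \<tau> * jacobi_shift (n + 1) \<mu> k \<tau>
          * frac_taylor n \<alpha> x t0 (t0 + T * \<tau>))
      = integral {0..1} (\<lambda>\<tau>. jacobi_weight \<mu> k \<tau> * jacobi_shift (n + 1) \<mu> k \<tau>
          * ((\<Sum>j=0..n. (T ^ j / fact j * (deriv ^^ j) x t0) * \<tau> ^ j)
             + (T powr \<alpha> / Gamma (\<alpha> + 1) * D) * \<tau> powr \<alpha>))" (is "?I = _")
    unfolding D_def by (rule integral_cong) (simp add: frac_taylor_rescaled[OF \<open>T > 0\<close>])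
  also have "\<dots> = (T powr \<alpha> / Gamma (\<alpha> + 1) * D) * ((\<alpha> gchoose (n + 1)) * B)"
    unfolding B_def using \<alpha>_pos
    by (intro integral_unique has_integral_jacobi_poly_plus_powr \<open>\<mu> > -1\<close>) simp
  finally have integral_eq: "?I = (T powr \<alpha> / Gamma (\<alpha> + 1) * D) * ((\<alpha> gchoose (n + 1)) * B)" .
  have B_eq: "Beta (\<alpha> + 1 + real k) (real n + \<mu> + 2) = B"
    by (simp add: B_def algebra_simps)
  have "B > 0" "T powr \<alpha> > 0" "Gamma (\<alpha> + 1) > 0"
    unfolding B_def Beta_def using \<alpha>_pos assms(3,4) by (auto intro!: divide_pos_pos Gamma_real_pos)
  then have "frac_estimator n \<alpha> k \<mu> T t0 (frac_taylor n \<alpha> x t0)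
      = D * ((\<alpha> gchoose (n + 1)) * fact (n + 1) * Gamma (\<alpha> - real n) / Gamma (\<alpha> + 1))"
    unfolding frac_estimator_def gamma_const_def integral_eq B_eq by (simp add: field_simps)
  then show ?thesis
    using gbinomial_Suc_fact_Gamma[OF assms(1)] \<open>Gamma (\<alpha> + 1) > 0\<close> by (simp add: D_def)
qed

end
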